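(* Let $\gamma\subset\mathbb R^3$ be a closed curve satisfying a three-point condition with constant $\Delta\in[0,\infty)$. Then for any two points $q_1=(x_1,y_1,z_1)$, $q_2=(x_2,y_2,z_2)$ on $\gamma$, $$(z_1-z_2)^2\le\Delta^2\big[(x_1-x_2)^2+(y_1-y_2)^2\big].$$
   Context: The slope $S_P$ of a plane $P\subset\mathbb R^3$ is $\tan\Theta$, $\Theta\in[0,\pi/2]$ the dihedral angle between $P$ and the $xy$-plane ($+\infty$ if $P$ is vertical). For $\gamma:S^1\to\mathbb R^3$, $|P\cap\gamma|:=\#\{u\in S^1:\gamma(u)\in P\}$. $\gamma$ satisfies a three-point condition with constant $\Delta$ if $S_P\le\Delta$ for every plane $P$ with $|P\cap\gamma|\ge3$. *)

theory Defs
  imports "HOL-Analysis.Analysis" "HOL-Library.Extended_Real"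
begin

text \<open>A plane in R^3 is {x. a \<bullet> x = b} with normal a \<noteq> 0.
  The dihedral angle between such a plane and the xy-plane (normal e3) is
  arccos(|a3| / |a|) in [0, pi/2]; the slope is tan of it, or +infinity
  if the plane is vertical (angle = pi/2).\<close>

definition plane :: "real^3 \<Rightarrow> real \<Rightarrow> (real^3) set" where
  "plane a b = {x. a \<bullet> x = b}"

definition dihedral_angle :: "real^3 \<Rightarrow> real" where
  "dihedral_angle a = arccos (\<bar>a $ 3\<bar> / norm a)"

definition plane_slope :: "real^3 \<Rightarrow> ereal" where
  "plane_slope a = (if dihedral_angle a = pi / 2 then \<infinity>
                    else ereal (tan (dihedral_angle a)))"

definition meets_at_least_3 :: "(complex \<Rightarrow> real^3) \<Rightarrow> (real^3) set \<Rightarrow> bool" where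
  "meets_at_least_3 \<gamma> P \<longleftrightarrow>
     (let U = {u \<in> sphere 0 1. \<gamma> u \<in> P} in infinite U \<or> card U \<ge> 3)"

definition three_point_condition :: "(complex \<Rightarrow> real^3) \<Rightarrow> real \<Rightarrow> bool" where
  "three_point_condition \<gamma> \<Delta> \<longleftrightarrow>
     (\<forall>a b. a \<noteq> 0 \<longrightarrow> meets_at_least_3 \<gamma> (plane a b) \<longrightarrow> plane_slope a \<le> ereal \<Delta>)"

end

theory Submission
  imports Defs
begin

text \<open>Any three points of the curve lie on a common plane, whose slope is at most \<open>\<Delta>\<close> by
  the three-point condition. The slope bound says that the horizontal part of the normal \<open>a\<close> is
  at most \<open>\<Delta> \<bar>a\<^sub>3\<bar>\<close>; since a chord \<open>d\<close> through two of the points is orthogonal to \<open>a\<close>,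
  Cauchy-Schwarz in the first two coordinates gives \<open>\<bar>a\<^sub>3 d\<^sub>3\<bar> \<le> \<Delta> \<bar>a\<^sub>3\<bar> \<bar>(d\<^sub>1, d\<^sub>2)\<bar>\<close>.\<close>

lemma inner_cart3: "(a::real^3) \<bullet> d = a$1 * d$1 + a$2 * d$2 + a$3 * d$3"
  by (simp add: inner_vec_def sum_3)

lemma norm_cart3_power2: "(norm (a::real^3))\<^sup>2 = (a$1)\<^sup>2 + (a$2)\<^sup>2 + (a$3)\<^sup>2"
  unfolding power2_norm_eq_inner inner_cart3 by (simp add: power2_eq_square)

lemma plane_slope_le_imp_horizontal_normal_le:
  fixes a :: "real^3"
  assumes "a \<noteq> 0" "plane_slope a \<le> ereal D" "D \<ge> 0"
  shows "(a$1)\<^sup>2 + (a$2)\<^sup>2 \<le> D\<^sup>2 * (a$3)\<^sup>2"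
proof -
  define c where "c = \<bar>a$3\<bar> / norm a"
  have norm_pos: "norm a > 0" using assms(1) by simp
  have c_nonneg: "c \<ge> 0" unfolding c_def by simp
  have "\<bar>a$3\<bar> \<le> norm a" by (rule component_le_norm_cart)
  hence c_le_1: "c \<le> 1" unfolding c_def using norm_pos by simp
  have not_vertical: "dihedral_angle a \<noteq> pi/2"
    using assms(2) unfolding plane_slope_def by auto
  hence tan_le: "tan (arccos c) \<le> D"
    using assms(2) unfolding plane_slope_def dihedral_angle_def c_def by auto
  have "c \<noteq> 0" using not_vertical unfolding dihedral_angle_def c_def[symmetric] by auto
  hence c_pos: "c > 0" using c_nonneg by simp
  have c_sq_le_1: "c\<^sup>2 \<le> 1" using power_le_one[OF c_nonneg c_le_1, of 2] by simp
  have "tan (arccos c) = sqrt (1 - c\<^sup>2) / c"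
    using c_nonneg c_le_1 by (simp add: tan_def cos_arccos_abs sin_arccos_abs)
  with tan_le c_pos have "sqrt (1 - c\<^sup>2) \<le> D * c" by (simp add: divide_le_eq)
  hence "(sqrt (1 - c\<^sup>2))\<^sup>2 \<le> (D * c)\<^sup>2" using c_sq_le_1 by (intro power_mono) auto
  hence "1 - c\<^sup>2 \<le> D\<^sup>2 * c\<^sup>2" using c_sq_le_1 by (simp add: power_mult_distrib)
  hence "(norm a)\<^sup>2 * (1 - c\<^sup>2) \<le> (norm a)\<^sup>2 * (D\<^sup>2 * c\<^sup>2)"
    by (intro mult_left_mono) auto
  moreover have "(norm a)\<^sup>2 * c\<^sup>2 = (a$3)\<^sup>2"
    unfolding c_def using norm_pos by (simp add: power_divide)
  ultimately have "(norm a)\<^sup>2 - (a$3)\<^sup>2 \<le> D\<^sup>2 * (a$3)\<^sup>2"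
    by (simp add: algebra_simps)
  thus ?thesis using norm_cart3_power2[of a] by simp
qed

lemma orthogonal_to_steep_normal_imp_vertical_le:
  fixes a d :: "real^3"
  assumes "a \<noteq> 0" "(a$1)\<^sup>2 + (a$2)\<^sup>2 \<le> D\<^sup>2 * (a$3)\<^sup>2" "a \<bullet> d = 0"
  shows "(d$3)\<^sup>2 \<le> D\<^sup>2 * ((d$1)\<^sup>2 + (d$2)\<^sup>2)"
proof -
  have a3_nonzero: "a$3 \<noteq> 0"
  proof
    assume "a$3 = 0"
    with assms(2) have "a$1 = 0" "a$2 = 0"
      by (smt (verit) zero_le_power2 power2_eq_square mult_eq_0_iff)+
    with \<open>a$3 = 0\<close> assms(1) show False by (simp add: vec_eq_iff forall_3)
  qed
  have "a$3 * d$3 = - (a$1 * d$1 + a$2 * d$2)"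
    using assms(3) unfolding inner_cart3 by linarith
  hence "(a$3 * d$3)\<^sup>2 = (a$1 * d$1 + a$2 * d$2)\<^sup>2"
    by (simp only: power2_minus)
  also have "\<dots> \<le> ((a$1)\<^sup>2 + (a$2)\<^sup>2) * ((d$1)\<^sup>2 + (d$2)\<^sup>2)"
  proof -
    have "((a$1)\<^sup>2 + (a$2)\<^sup>2) * ((d$1)\<^sup>2 + (d$2)\<^sup>2) - (a$1 * d$1 + a$2 * d$2)\<^sup>2
          = (a$1 * d$2 - a$2 * d$1)\<^sup>2" by (simp add: power2_eq_square algebra_simps)
    thus ?thesis by (metis diff_ge_0_iff_ge zero_le_power2)
  qed
  also have "\<dots> \<le> D\<^sup>2 * (a$3)\<^sup>2 * ((d$1)\<^sup>2 + (d$2)\<^sup>2)"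
    using assms(2) by (intro mult_right_mono) auto
  finally have "(a$3)\<^sup>2 * (d$3)\<^sup>2 \<le> (a$3)\<^sup>2 * (D\<^sup>2 * ((d$1)\<^sup>2 + (d$2)\<^sup>2))"
    by (simp add: power_mult_distrib algebra_simps)
  thus ?thesis using a3_nonzero by simp
qed

lemma plane_through_three_points:
  fixes p q r :: "real^3"
  obtains a b where "a \<noteq> 0" "p \<in> plane a b" "q \<in> plane a b" "r \<in> plane a b"
proof -
  have "dim {q - p, r - p} \<le> card {q - p, r - p}" by (rule dim_le_card) (auto intro: span_base)
  also have "\<dots> \<le> 2" by (simp add: card_insert_le_m1)
  finally have "dim {q - p, r - p} < DIM(real^3)" by simp
  then obtain a :: "real^3" where a: "a \<noteq> 0" "\<And>y. y \<in> span {q - p, r - p} \<Longrightarrow> orthogonal a y"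
    using orthogonal_to_subspace_exists by blast
  have "a \<bullet> (q - p) = 0" "a \<bullet> (r - p) = 0"
    using a(2) by (simp_all add: span_base orthogonal_def)
  with a(1) show ?thesis
    by (intro that[of a "a \<bullet> p"]) (simp_all add: plane_def inner_diff_right)
qed

lemma meets_at_least_3I:
  assumes "{u1, u2, u3} \<subseteq> {u \<in> sphere 0 1. \<gamma> u \<in> P}" "u1 \<noteq> u2" "u1 \<noteq> u3" "u2 \<noteq> u3"
  shows "meets_at_least_3 \<gamma> P"
proof (cases "finite {u \<in> sphere 0 1. \<gamma> u \<in> P}")
  case True
  have "card {u1, u2, u3} = 3" using assms(2-4) by auto
  with card_mono[OF True assms(1)] show ?thesis
    unfolding meets_at_least_3_def Let_def by simp
qed (simp add: meets_at_least_3_def)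

lemma sphere_obtain_third_point:
  fixes u1 u2 :: complex
  obtains u3 where "u3 \<in> sphere 0 1" "u3 \<noteq> u1" "u3 \<noteq> u2"
proof -
  have "1 \<in> sphere (0::complex) 1" "-1 \<in> sphere (0::complex) 1" "\<i> \<in> sphere (0::complex) 1"
    by auto
  moreover have "(1::complex) \<noteq> -1" "(1::complex) \<noteq> \<i>" "(-1::complex) \<noteq> \<i>"
    by (auto simp: complex_eq_iff)
  ultimately show ?thesis using that by metis
qed

theorem mainTheorem10:
  fixes \<gamma> :: "complex \<Rightarrow> real^3" and \<Delta> :: real
  assumes "continuous_on (sphere 0 1) \<gamma>"
    and "\<Delta> \<ge> 0"
    and "three_point_condition \<gamma> \<Delta>"
    and "u1 \<in> sphere 0 1" and "u2 \<in> sphere 0 1"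
  shows "(\<gamma> u1 $ 3 - \<gamma> u2 $ 3)\<^sup>2
           \<le> \<Delta>\<^sup>2 * ((\<gamma> u1 $ 1 - \<gamma> u2 $ 1)\<^sup>2 + (\<gamma> u1 $ 2 - \<gamma> u2 $ 2)\<^sup>2)"
proof (cases "u1 = u2")
  case False
  obtain u3 where u3: "u3 \<in> sphere 0 1" "u3 \<noteq> u1" "u3 \<noteq> u2"
    using sphere_obtain_third_point by metis
  obtain a b where a: "a \<noteq> 0" and on_plane:
      "\<gamma> u1 \<in> plane a b" "\<gamma> u2 \<in> plane a b" "\<gamma> u3 \<in> plane a b"
    using plane_through_three_points by metis
  have "meets_at_least_3 \<gamma> (plane a b)"
    using False u3 on_plane assms(4,5) by (intro meets_at_least_3I[of u1 u2 u3]) auto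
  hence "plane_slope a \<le> ereal \<Delta>"
    using assms(3) a unfolding three_point_condition_def by blast
  moreover have "a \<bullet> (\<gamma> u1 - \<gamma> u2) = 0"
    using on_plane by (simp add: plane_def inner_diff_right)
  ultimately show ?thesis
    using a assms(2) plane_slope_le_imp_horizontal_normal_le
      orthogonal_to_steep_normal_imp_vertical_le[of a \<Delta> "\<gamma> u1 - \<gamma> u2"] by simp
qed simp

end
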